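(* Assume (F) and (H), let $\varepsilon>0$, and let $c$ be an admissible speed. Then: - $c\ge0$; - $cv+h(v)-F(v)>0$ for every $v\in(0,1)$, where $F(v)=\int_0^v f(s)\,ds$; - the solution $y$ of (P1) satisfies $y(v)\le\sqrt{\varepsilon^2+(cv+h(v)-F(v))^2}-\varepsilon$ on $[0,1]$; - consequently $c\ge\sup_{v\in(0,1]}\frac{F(v)-h(v)}{v}$.
   Context: Assumptions. - (F): $f\in C([0,1])$, $f(0)=f(1)=0$, $f(s)>0$ for $s\in(0,1)$, and there is $k>0$ with $f(s)\le ks$ and $f(s)\le k(1-s)$ for all $s\in[0,1]$. - (H): $h\in C^2([0,1])$ with $h(0)=h'(0)=0$. Problem (P1): $y'=(c+h'(v))\frac{\sqrt{y(2\varepsilon+y)}}{\varepsilon+y}-f(v)$ on $[0,1]$, $y(0)=y(1)=0$, $y>0$ on $(0,1)$. A speed $c\in\mathbb R$ is admissible if (P1) has a solution. *)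

theory Defs
  imports "HOL-Analysis.Analysis"
begin

definition hypF :: "(real \<Rightarrow> real) \<Rightarrow> bool" where
  "hypF f \<longleftrightarrow> continuous_on {0..1} f \<and> f 0 = 0 \<and> f 1 = 0
     \<and> (\<forall>s\<in>{0<..<1}. f s > 0)
     \<and> (\<exists>k>0. \<forall>s\<in>{0..1}. f s \<le> k * s \<and> f s \<le> k * (1 - s))"

definition hypH :: "(real \<Rightarrow> real) \<Rightarrow> (real \<Rightarrow> real) \<Rightarrow> bool" where
  "hypH h h' \<longleftrightarrow> (\<exists>h''. (\<forall>x\<in>{0..1}. (h has_real_derivative h' x) (at x within {0..1})
                          \<and> (h' has_real_derivative h'' x) (at x within {0..1}))
                 \<and> continuous_on {0..1} h'')
     \<and> h 0 = 0 \<and> h' 0 = 0"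

definition P1_solution ::
  "real \<Rightarrow> real \<Rightarrow> (real \<Rightarrow> real) \<Rightarrow> (real \<Rightarrow> real) \<Rightarrow> (real \<Rightarrow> real) \<Rightarrow> bool" where
  "P1_solution \<epsilon> c f h' y \<longleftrightarrow>
     (\<forall>v\<in>{0..1}. (y has_real_derivative
        ((c + h' v) * sqrt (y v * (2 * \<epsilon> + y v)) / (\<epsilon> + y v) - f v)) (at v within {0..1}))
     \<and> y 0 = 0 \<and> y 1 = 0 \<and> (\<forall>v\<in>{0<..<1}. y v > 0)"

definition admissible ::
  "real \<Rightarrow> real \<Rightarrow> (real \<Rightarrow> real) \<Rightarrow> (real \<Rightarrow> real) \<Rightarrow> bool" where
  "admissible \<epsilon> c f h' \<longleftrightarrow> (\<exists>y. P1_solution \<epsilon> c f h' y)"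

end

theory Submission
  imports Defs
begin

text \<open>Along a solution y of (P1) put z = sqrt(y(2\<epsilon> + y)) and g(v) = cv + h(v) - F(v).
  Since z < \<epsilon> + y, the equation gives z' = (c + h') - f (\<epsilon> + y)/z \<le> c + h' - f = g',
  and z(0) = g(0) = 0, so z \<le> g on [0,1]. Solving z \<le> g for y gives the upper bound
  sqrt(\<epsilon>^2 + g^2) - \<epsilon>; positivity of y on (0,1) makes g positive there, and g \<ge> 0 yields
  the lower bound on c. Finally c \<ge> 0 because F \<ge> 0 and h(v)/v \<rightarrow> h'(0) = 0.\<close>

lemma DERIV_sqrt_mult_add_self:
  fixes y :: "real \<Rightarrow> real"
  assumes "(y has_real_derivative Y) (at x)" and "\<epsilon> > 0" and "y x > 0"
  shows "((\<lambda>v. sqrt (y v * (2 * \<epsilon> + y v))) has_real_derivative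
           Y * (\<epsilon> + y x) / sqrt (y x * (2 * \<epsilon> + y x))) (at x)"
proof -
  have pos: "y x * (2 * \<epsilon> + y x) > 0" using assms(2,3) by simp
  show ?thesis
    using assms(1) pos
    by (auto intro!: derivative_eq_intros simp: field_simps)
qed

lemma sqrt_mult_add_self_less:
  fixes t \<epsilon> :: real
  assumes "t \<ge> 0" and "\<epsilon> > 0"
  shows "sqrt (t * (2 * \<epsilon> + t)) < \<epsilon> + t"
proof (rule real_less_lsqrt)
  show "t * (2 * \<epsilon> + t) < (\<epsilon> + t)\<^sup>2"
    using assms by (simp add: power2_eq_square algebra_simps)
qed (use assms in auto)

lemma le_sqrt_square_add_sub:
  fixes t \<epsilon> g :: real
  assumes "t \<ge> 0" and "\<epsilon> \<ge> 0" and "sqrt (t * (2 * \<epsilon> + t)) \<le> g"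
  shows "t \<le> sqrt (\<epsilon>\<^sup>2 + g\<^sup>2) - \<epsilon>"
proof -
  have "(\<epsilon> + t)\<^sup>2 = \<epsilon>\<^sup>2 + (sqrt (t * (2 * \<epsilon> + t)))\<^sup>2"
    using assms(1,2) by (simp add: power2_eq_square algebra_simps)
  also have "\<dots> \<le> \<epsilon>\<^sup>2 + g\<^sup>2"
    using assms by (intro add_left_mono power_mono) auto
  finally have "\<epsilon> + t \<le> sqrt (\<epsilon>\<^sup>2 + g\<^sup>2)"
    using assms(1,2) by (simp add: real_le_rsqrt)
  then show ?thesis by simp
qed

lemma P1_solution_nonneg:
  assumes "P1_solution \<epsilon> c f h' y" and "v \<in> {0..1}"
  shows "y v \<ge> 0"
  using assms unfolding P1_solution_def
  by (cases "v = 0 \<or> v = 1") (auto intro: less_imp_le)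

lemma hypF_integral_nonneg:
  assumes "hypF f" and "v \<in> {0..1}"
  shows "integral {0..v} f \<ge> 0"
proof (rule integral_nonneg)
  have "continuous_on {0..v} f"
    using assms unfolding hypF_def by (auto elim: continuous_on_subset)
  then show "f integrable_on {0..v}"
    by (rule integrable_continuous_real)
  show "0 \<le> f x" if "x \<in> {0..v}" for x
    using assms that unfolding hypF_def by (cases "x = 0 \<or> x = 1") (auto intro: less_imp_le)
qed

lemma P1_solution_sqrt_le:
  fixes f h h' y :: "real \<Rightarrow> real" and \<epsilon> c :: real
  assumes "hypF f" and "hypH h h'" and "\<epsilon> > 0" and sol: "P1_solution \<epsilon> c f h' y"
    and v: "v \<in> {0..1}"
  shows "sqrt (y v * (2 * \<epsilon> + y v)) \<le> c * v + h v - integral {0..v} f"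
proof -
  define z where "z = (\<lambda>v. sqrt (y v * (2 * \<epsilon> + y v)))"
  define g where "g = (\<lambda>v. c * v + h v - integral {0..v} f)"
  have fc: "continuous_on {0..1} f" and fpos: "\<And>s. s \<in> {0<..<1} \<Longrightarrow> f s > 0"
    using assms(1) unfolding hypF_def by auto
  have hd: "\<And>x. x \<in> {0..1} \<Longrightarrow> (h has_real_derivative h' x) (at x within {0..1})"
    and h0: "h 0 = 0"
    using assms(2) unfolding hypH_def by auto
  have yd: "\<And>x. x \<in> {0..1} \<Longrightarrow> (y has_real_derivative
        ((c + h' x) * z x / (\<epsilon> + y x) - f x)) (at x within {0..1})"
    and y0: "y 0 = 0" and ypos: "\<And>x. x \<in> {0<..<1} \<Longrightarrow> y x > 0"
    using sol unfolding P1_solution_def z_def by auto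
  have gd: "\<And>x. x \<in> {0..1} \<Longrightarrow> (g has_real_derivative c + h' x - f x) (at x within {0..1})"
    unfolding g_def by (auto intro!: derivative_eq_intros hd integral_has_real_derivative fc)
  have "continuous_on {0..1} y" "continuous_on {0..1} g"
    using yd gd by (meson DERIV_continuous continuous_on_eq_continuous_within)+
  then have cont: "continuous_on {0..v} (\<lambda>x. g x - z x)"
    unfolding z_def using v by (auto intro!: continuous_intros elim: continuous_on_subset)
  have mono: "\<exists>d. ((\<lambda>x. g x - z x) has_real_derivative d) (at x) \<and> d \<ge> 0"
    if x: "0 < x" "x < 1" for x
  proof -
    have at: "at x within {0..1} = at x"
      using x by (simp add: at_within_Icc_at)
    have yx: "y x > 0" and fx: "f x > 0"
      using ypos fpos x by auto
    have zx: "0 < z x" "z x < \<epsilon> + y x"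
      unfolding z_def using sqrt_mult_add_self_less[of "y x" \<epsilon>] yx assms(3) by auto
    have "(z has_real_derivative
            ((c + h' x) * z x / (\<epsilon> + y x) - f x) * (\<epsilon> + y x) / z x) (at x)"
      unfolding z_def using DERIV_sqrt_mult_add_self yd[of x] x at assms(3) yx
      by (simp add: z_def)
    also have "((c + h' x) * z x / (\<epsilon> + y x) - f x) * (\<epsilon> + y x) / z x
                 = c + h' x - f x * ((\<epsilon> + y x) / z x)"
      using zx assms(3) yx by (simp add: field_simps add_pos_pos[THEN less_imp_neq, symmetric])
    finally have zd: "(z has_real_derivative c + h' x - f x * ((\<epsilon> + y x) / z x)) (at x)" .
    have "((\<lambda>x. g x - z x) has_real_derivative
            (c + h' x - f x) - (c + h' x - f x * ((\<epsilon> + y x) / z x))) (at x)"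
      using gd[of x] x at by (intro DERIV_diff zd) auto
    also have "(c + h' x - f x) - (c + h' x - f x * ((\<epsilon> + y x) / z x))
                 = f x * ((\<epsilon> + y x) / z x - 1)"
      by (simp add: algebra_simps)
    finally have "((\<lambda>x. g x - z x) has_real_derivative f x * ((\<epsilon> + y x) / z x - 1)) (at x)" .
    moreover have "f x * ((\<epsilon> + y x) / z x - 1) \<ge> 0"
      using zx fx by simp
    ultimately show ?thesis by blast
  qed
  have "g 0 - z 0 \<le> g v - z v"
    by (rule DERIV_nonneg_imp_increasing_open[OF _ _ cont]) (use v mono in auto)
  then show ?thesis
    using h0 y0 unfolding g_def z_def by simp
qed

lemma nonneg_of_slope_lower_bound:
  fixes h :: "real \<Rightarrow> real" and c :: real
  assumes "(h has_real_derivative 0) (at 0 within {0..1})" and "h 0 = 0"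
    and "\<And>v. v \<in> {0<..<1} \<Longrightarrow> - h v \<le> c * v"
  shows "c \<ge> 0"
proof -
  have "((\<lambda>v. h v / v) \<longlongrightarrow> 0) (at_right 0)"
    using assms(1,2) by (simp add: has_field_derivative_iff at_within_Icc_at_right)
  then have "((\<lambda>v. - (h v / v)) \<longlongrightarrow> 0) (at_right 0)"
    using tendsto_minus by fastforce
  moreover have "eventually (\<lambda>v. - (h v / v) \<le> c) (at_right (0::real))"
  proof (rule eventually_at_rightI[of 0 1])
    show "- (h v / v) \<le> c" if "v \<in> {0<..<1}" for v
      using assms(3)[OF that] that by (simp add: field_simps)
  qed simp
  ultimately show ?thesis
    using tendsto_le[OF trivial_limit_at_right_real tendsto_const] by blast
qed

lemma P1_solution_gap_nonneg:
  assumes "hypF f" and "hypH h h'" and "\<epsilon> > 0" and sol: "P1_solution \<epsilon> c f h' y"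
    and "v \<in> {0..1}"
  shows "c * v + h v - integral {0..v} f \<ge> 0"
proof -
  have "0 \<le> sqrt (y v * (2 * \<epsilon> + y v))"
    using P1_solution_nonneg[OF sol assms(5)] assms(3) by simp
  then show ?thesis
    using P1_solution_sqrt_le[OF assms] by linarith
qed

lemma P1_solution_gap_pos:
  assumes "hypF f" and "hypH h h'" and "\<epsilon> > 0" and sol: "P1_solution \<epsilon> c f h' y"
    and v: "v \<in> {0<..<1}"
  shows "c * v + h v - integral {0..v} f > 0"
proof -
  have "y v > 0"
    using sol v unfolding P1_solution_def by blast
  then have "0 < sqrt (y v * (2 * \<epsilon> + y v))"
    using assms(3) by simp
  moreover have "v \<in> {0..1}"
    using v by simp
  ultimately show ?thesis
    using P1_solution_sqrt_le[OF assms(1-4)] by (meson less_le_trans)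
qed

lemma P1_solution_upper_bound:
  assumes "hypF f" and "hypH h h'" and "\<epsilon> > 0" and "P1_solution \<epsilon> c f h' y"
    and "v \<in> {0..1}"
  shows "y v \<le> sqrt (\<epsilon>\<^sup>2 + (c * v + h v - integral {0..v} f)\<^sup>2) - \<epsilon>"
  using le_sqrt_square_add_sub P1_solution_nonneg[OF assms(4,5)] P1_solution_sqrt_le[OF assms]
    assms(3) by simp

theorem mainTheorem3:
  fixes f h h' :: "real \<Rightarrow> real" and \<epsilon> c :: real
  assumes "hypF f" and "hypH h h'" and "\<epsilon> > 0" and "admissible \<epsilon> c f h'"
  defines "F \<equiv> (\<lambda>v. integral {0..v} f)"
  shows "c \<ge> 0
    \<and> (\<forall>v\<in>{0<..<1}. c * v + h v - F v > 0)
    \<and> (\<forall>y. P1_solution \<epsilon> c f h' y \<longrightarrow>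
          (\<forall>v\<in>{0..1}. y v \<le> sqrt (\<epsilon>\<^sup>2 + (c * v + h v - F v)\<^sup>2) - \<epsilon>))
    \<and> c \<ge> (SUP v\<in>{0<..1}. (F v - h v) / v)"
proof -
  obtain y where sol: "P1_solution \<epsilon> c f h' y"
    using assms(4) unfolding admissible_def by blast
  note gap_nonneg = P1_solution_gap_nonneg[OF assms(1-3) sol, folded F_def]
  have "c \<ge> 0"
  proof (rule nonneg_of_slope_lower_bound)
    show "(h has_real_derivative 0) (at 0 within {0..1})" "h 0 = 0"
      using assms(2) unfolding hypH_def by force+
    show "- h v \<le> c * v" if "v \<in> {0<..<1}" for v
      using gap_nonneg[of v] hypF_integral_nonneg[OF assms(1), of v] that unfolding F_def by auto
  qed
  moreover have "c \<ge> (SUP v\<in>{0<..1}. (F v - h v) / v)"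
  proof (rule cSUP_least)
    show "(F v - h v) / v \<le> c" if "v \<in> {0<..1}" for v
      using gap_nonneg[of v] that unfolding F_def by (simp add: divide_le_eq mult.commute)
  qed simp
  ultimately show ?thesis
    using P1_solution_gap_pos[OF assms(1-3) sol] P1_solution_upper_bound[OF assms(1-3)]
    unfolding F_def by blast
qed

end
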